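(* Let $A$ be a Banach algebra with a left approximate identity and suppose there exists $\phi\in\Delta(A)$. Then the triangular Banach algebra $T=\begin{pmatrix}A&A\\0&A\end{pmatrix}$ is not approximately biprojective.
   Context: $\Delta(A)$ is the set of nonzero multiplicative linear functionals on $A$. $T$ consists of matrices $\begin{pmatrix}a&x\\0&b\end{pmatrix}$ with $a,x,b\in A$, with matrix operations and norm $\|a\|+\|x\|+\|b\|$. A Banach algebra $B$ is approximately biprojective if there is a net $(\rho_\alpha)$ of continuous $B$-bimodule morphisms $B\to B\otimes_pB$ with $\pi_B\circ\rho_\alpha(b)\to b$ for all $b\in B$, where $\pi_B(b\otimes c)=bc$. *)

theory Defs
  imports "HOL-Analysis.Analysis"
begin

text \<open>Isabelle/HOL has no class of complex normed vector spaces.  A complex Banach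
algebra is modelled as a type of class real_normed_algebra and banach together with a
complex scalar multiplication cs extending the real one and compatible with product
and norm.\<close>

definition complex_scal :: "(complex \<Rightarrow> 'a::{real_normed_algebra,banach} \<Rightarrow> 'a) \<Rightarrow> bool" where
  "complex_scal cs \<longleftrightarrow>
     (\<forall>r x. cs (complex_of_real r) x = scaleR r x) \<and>
     (\<forall>c x y. cs c (x + y) = cs c x + cs c y) \<and>
     (\<forall>c d x. cs (c + d) x = cs c x + cs d x) \<and>
     (\<forall>c d x. cs c (cs d x) = cs (c * d) x) \<and>
     (\<forall>x. cs 1 x = x) \<and>
     (\<forall>c x y. cs c (x * y) = cs c x * y) \<and>
     (\<forall>c x y. cs c (x * y) = x * cs c y) \<and>
     (\<forall>c x. norm (cs c x) = cmod c * norm x)"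

text \<open>Left approximate identity: a net (e_i) with e_i a \<rightarrow> a for all a.
A net is represented by a proper filter on A (the image filter of the net).\<close>

definition has_left_approx_identity :: "'a::real_normed_algebra itself \<Rightarrow> bool" where
  "has_left_approx_identity _ \<longleftrightarrow>
     (\<exists>F::'a filter. F \<noteq> bot \<and> (\<forall>a::'a. ((\<lambda>e. e * a) \<longlongrightarrow> a) F))"

definition character_space :: "(complex \<Rightarrow> 'a \<Rightarrow> 'a) \<Rightarrow> ('a::real_normed_algebra \<Rightarrow> complex) set" where
  "character_space cs = {\<phi>.
      (\<forall>x y. \<phi> (x + y) = \<phi> x + \<phi> y) \<and>
      (\<forall>c x. \<phi> (cs c x) = c * \<phi> x) \<and>
      (\<forall>x y. \<phi> (x * y) = \<phi> x * \<phi> y) \<and>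
      (\<exists>x. \<phi> x \<noteq> 0)}"

text \<open>An element (a, x, b) stands for the matrix [[a, x], [0, b]].\<close>

definition tri_scal :: "(complex \<Rightarrow> 'a \<Rightarrow> 'a) \<Rightarrow> complex \<Rightarrow> 'a \<times> 'a \<times> 'a \<Rightarrow> 'a \<times> 'a \<times> 'a" where
  "tri_scal cs c t = (case t of (a, x, b) \<Rightarrow> (cs c a, cs c x, cs c b))"

definition tri_mult :: "'a::real_normed_algebra \<times> 'a \<times> 'a \<Rightarrow> 'a \<times> 'a \<times> 'a \<Rightarrow> 'a \<times> 'a \<times> 'a" where
  "tri_mult s t = (case s of (a, x, b) \<Rightarrow> case t of (a', x', b') \<Rightarrow>
      (a * a', a * x' + x * b', b * b'))"

definition tri_norm :: "'a::real_normed_algebra \<times> 'a \<times> 'a \<Rightarrow> real" where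
  "tri_norm t = (case t of (a, x, b) \<Rightarrow> norm a + norm x + norm b)"

text \<open>Every element of the completed
projective tensor product is an absolutely convergent series \<Sum> x_n \<otimes> y_n with
\<Sum> ||x_n|| ||y_n|| < \<infinity>; two such series represent the same element iff every bounded
bilinear functional takes the same value on them (the dual of B \<otimes>_p B is the space of
bounded bilinear forms, Hahn-Banach).  Elements are thus represented by sequences
u :: nat \<Rightarrow> 'b \<times> 'b.\<close>

definition tensor_rep :: "('b \<Rightarrow> real) \<Rightarrow> (nat \<Rightarrow> 'b \<times> 'b) \<Rightarrow> bool" where
  "tensor_rep nrm u \<longleftrightarrow> summable (\<lambda>n. nrm (fst (u n)) * nrm (snd (u n)))"

definition bounded_bilinear_functional ::
  "(complex \<Rightarrow> 'b::ab_group_add \<Rightarrow> 'b) \<Rightarrow> ('b \<Rightarrow> real) \<Rightarrow> ('b \<Rightarrow> 'b \<Rightarrow> complex) \<Rightarrow> bool" where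
  "bounded_bilinear_functional scal nrm G \<longleftrightarrow>
     (\<forall>x x' y. G (x + x') y = G x y + G x' y) \<and>
     (\<forall>x y y'. G x (y + y') = G x y + G x y') \<and>
     (\<forall>c x y. G (scal c x) y = c * G x y) \<and>
     (\<forall>c x y. G x (scal c y) = c * G x y) \<and>
     (\<exists>K. \<forall>x y. cmod (G x y) \<le> K * nrm x * nrm y)"

definition tensor_eq ::
  "(complex \<Rightarrow> 'b::ab_group_add \<Rightarrow> 'b) \<Rightarrow> ('b \<Rightarrow> real) \<Rightarrow> (nat \<Rightarrow> 'b \<times> 'b) \<Rightarrow> (nat \<Rightarrow> 'b \<times> 'b) \<Rightarrow> bool" where
  "tensor_eq scal nrm u v \<longleftrightarrow>
     (\<forall>G. bounded_bilinear_functional scal nrm G \<longrightarrow>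
        (\<Sum>n. G (fst (u n)) (snd (u n))) = (\<Sum>n. G (fst (v n)) (snd (v n))))"

definition tensor_norm ::
  "(complex \<Rightarrow> 'b::ab_group_add \<Rightarrow> 'b) \<Rightarrow> ('b \<Rightarrow> real) \<Rightarrow> (nat \<Rightarrow> 'b \<times> 'b) \<Rightarrow> real" where
  "tensor_norm scal nrm u =
     Inf {(\<Sum>n. nrm (fst (v n)) * nrm (snd (v n))) | v. tensor_rep nrm v \<and> tensor_eq scal nrm u v}"

definition tensor_add :: "(nat \<Rightarrow> 'b \<times> 'b) \<Rightarrow> (nat \<Rightarrow> 'b \<times> 'b) \<Rightarrow> nat \<Rightarrow> 'b \<times> 'b" where
  "tensor_add u v = (\<lambda>n. if even n then u (n div 2) else v (n div 2))"

definition tensor_scal :: "(complex \<Rightarrow> 'b \<Rightarrow> 'b) \<Rightarrow> complex \<Rightarrow> (nat \<Rightarrow> 'b \<times> 'b) \<Rightarrow> nat \<Rightarrow> 'b \<times> 'b" where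
  "tensor_scal scal c u = (\<lambda>n. (scal c (fst (u n)), snd (u n)))"

definition tensor_lmult :: "('b \<Rightarrow> 'b \<Rightarrow> 'b) \<Rightarrow> 'b \<Rightarrow> (nat \<Rightarrow> 'b \<times> 'b) \<Rightarrow> nat \<Rightarrow> 'b \<times> 'b" where
  "tensor_lmult mul a u = (\<lambda>n. (mul a (fst (u n)), snd (u n)))"

definition tensor_rmult :: "('b \<Rightarrow> 'b \<Rightarrow> 'b) \<Rightarrow> (nat \<Rightarrow> 'b \<times> 'b) \<Rightarrow> 'b \<Rightarrow> nat \<Rightarrow> 'b \<times> 'b" where
  "tensor_rmult mul u a = (\<lambda>n. (fst (u n), mul (snd (u n)) a))"

definition tensor_pi :: "('b::ab_group_add \<Rightarrow> 'b \<Rightarrow> 'b) \<Rightarrow> ('b \<Rightarrow> real) \<Rightarrow> (nat \<Rightarrow> 'b \<times> 'b) \<Rightarrow> 'b" where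
  "tensor_pi mul nrm u =
     (THE z. ((\<lambda>N. nrm ((\<Sum>n<N. mul (fst (u n)) (snd (u n))) - z)) \<longlongrightarrow> 0) sequentially)"

definition bimodule_morphism ::
  "(complex \<Rightarrow> 'b::ab_group_add \<Rightarrow> 'b) \<Rightarrow> ('b \<Rightarrow> 'b \<Rightarrow> 'b) \<Rightarrow> ('b \<Rightarrow> real)
     \<Rightarrow> ('b \<Rightarrow> nat \<Rightarrow> 'b \<times> 'b) \<Rightarrow> bool" where
  "bimodule_morphism scal mul nrm \<rho> \<longleftrightarrow>
     (\<forall>b. tensor_rep nrm (\<rho> b)) \<and>
     (\<forall>c b b'. tensor_eq scal nrm (\<rho> (scal c b + b')) (tensor_add (tensor_scal scal c (\<rho> b)) (\<rho> b'))) \<and>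
     (\<exists>C. \<forall>b. tensor_norm scal nrm (\<rho> b) \<le> C * nrm b) \<and>
     (\<forall>a b. tensor_eq scal nrm (\<rho> (mul a b)) (tensor_lmult mul a (\<rho> b))) \<and>
     (\<forall>a b. tensor_eq scal nrm (\<rho> (mul b a)) (tensor_rmult mul (\<rho> b) a))"

text \<open>The net is represented by a proper filter on the
space of maps (its image filter), eventually consisting of bimodule morphisms.\<close>

definition approx_biprojective ::
  "(complex \<Rightarrow> 'b::ab_group_add \<Rightarrow> 'b) \<Rightarrow> ('b \<Rightarrow> 'b \<Rightarrow> 'b) \<Rightarrow> ('b \<Rightarrow> real) \<Rightarrow> bool" where
  "approx_biprojective scal mul nrm \<longleftrightarrow>
     (\<exists>F::('b \<Rightarrow> nat \<Rightarrow> 'b \<times> 'b) filter. F \<noteq> bot \<and>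
        eventually (bimodule_morphism scal mul nrm) F \<and>
        (\<forall>b. ((\<lambda>\<rho>. nrm (tensor_pi mul nrm (\<rho> b) - b)) \<longlongrightarrow> 0) F))"

end

theory Submission
  imports Defs
begin

text \<open>Suppose \<open>\<rho>\<close> is a bimodule morphism \<open>T \<rightarrow> T \<otimes>\<^sub>p T\<close> with \<open>\<pi>(\<rho> z)\<close> within distance 1
  of \<open>z = (0, y, 0)\<close>, where \<open>\<phi> y = 1\<close>.  The bounded bilinear form
  \<open>(s, t) \<mapsto> \<phi>((st)\<^sub>1\<^sub>2) = \<phi>(s\<^sub>1\<^sub>1) \<phi>(t\<^sub>1\<^sub>2) + \<phi>(s\<^sub>1\<^sub>2) \<phi>(t\<^sub>2\<^sub>2)\<close> evaluated on \<open>\<rho> z\<close> equals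
  \<open>\<phi>(\<pi>(\<rho> z)\<^sub>1\<^sub>2)\<close>, which is within 1 of \<open>\<phi> y = 1\<close> because characters have norm at most 1.
  On the other hand, for \<open>e\<close> from the left approximate identity, \<open>z\<close> is close to both
  \<open>(0, e, 0) (0, 0, y)\<close> and \<open>(e, 0, 0) (0, y, 0)\<close>; the module properties and continuity of \<open>\<rho>\<close>
  then force each of the two summands to vanish on \<open>\<rho> z\<close>.\<close>

lemma sums_interleave:
  fixes a b :: "nat \<Rightarrow> 'c::real_normed_vector"
  assumes "a sums s" "b sums t"
  shows "(\<lambda>n. if even n then a (n div 2) else b (n div 2)) sums (s + t)"
proof -
  let ?A = "\<lambda>n. if even n then a (n div 2) else 0"
  let ?B = "\<lambda>n. if even n then 0 else b (n div 2)"
  have "(\<lambda>n. ?A (2 * n)) sums s" using assms(1) by simp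
  hence A: "?A sums s"
    by (subst (asm) sums_mono_reindex[of "\<lambda>n. 2 * n"]) (auto simp: strict_mono_def elim!: oddE)
  have "(\<lambda>n. ?B (2 * n + 1)) sums t" using assms(2) by simp
  hence B: "?B sums t"
    by (subst (asm) sums_mono_reindex[of "\<lambda>n. 2 * n + 1"])
       (auto simp: strict_mono_def image_iff elim!: oddE)
  have "(\<lambda>n. ?A n + ?B n) = (\<lambda>n. if even n then a (n div 2) else b (n div 2))" by auto
  with sums_add[OF A B] show ?thesis by simp
qed

section \<open>Bounded bilinear functionals on the projective tensor product\<close>

definition tensor_functional :: "('b \<Rightarrow> 'b \<Rightarrow> complex) \<Rightarrow> (nat \<Rightarrow> 'b \<times> 'b) \<Rightarrow> complex" where
  "tensor_functional G u = (\<Sum>n. G (fst (u n)) (snd (u n)))"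

lemma tensor_functional_cong:
  assumes "tensor_eq scal nrm u v" "bounded_bilinear_functional scal nrm G"
  shows "tensor_functional G u = tensor_functional G v"
  using assms unfolding tensor_eq_def tensor_functional_def by blast

context
  fixes scal :: "complex \<Rightarrow> 'b::ab_group_add \<Rightarrow> 'b" and nrm :: "'b \<Rightarrow> real"
    and G :: "'b \<Rightarrow> 'b \<Rightarrow> complex"
  assumes G: "bounded_bilinear_functional scal nrm G"
    and nrm_nonneg: "\<And>x. 0 \<le> nrm x"
begin

lemma bounded_bilinear_functional_pos_bound:
  "\<exists>K > 0. \<forall>x y. cmod (G x y) \<le> K * nrm x * nrm y"
proof -
  obtain K where K: "\<And>x y. cmod (G x y) \<le> K * nrm x * nrm y"
    using G unfolding bounded_bilinear_functional_def by blast
  have "cmod (G x y) \<le> (\<bar>K\<bar> + 1) * nrm x * nrm y" for x y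
  proof -
    have "K * nrm x * nrm y \<le> (\<bar>K\<bar> + 1) * nrm x * nrm y"
      using nrm_nonneg[of x] nrm_nonneg[of y] by (intro mult_right_mono) auto
    with K[of x y] show ?thesis by linarith
  qed
  then show ?thesis by (intro exI[of _ "\<bar>K\<bar> + 1"]) simp
qed

lemma summable_norm_tensor_functional:
  assumes "tensor_rep nrm v"
  shows "summable (\<lambda>n. cmod (G (fst (v n)) (snd (v n))))"
proof -
  obtain K where K: "\<And>x y. cmod (G x y) \<le> K * nrm x * nrm y"
    using bounded_bilinear_functional_pos_bound by blast
  have "summable (\<lambda>n. K * (nrm (fst (v n)) * nrm (snd (v n))))"
    using assms unfolding tensor_rep_def by (rule summable_mult)
  moreover have "norm (cmod (G x y)) \<le> K * (nrm x * nrm y)" for x y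
    using K[of x y] by (simp add: mult.assoc)
  ultimately show ?thesis
    by (rule summable_comparison_test')
qed

lemma tensor_functional_bounded:
  obtains K where "K > 0"
    "\<And>v. tensor_rep nrm v \<Longrightarrow> cmod (tensor_functional G v) \<le> K * tensor_norm scal nrm v"
proof -
  obtain K where K: "K > 0" "\<And>x y. cmod (G x y) \<le> K * nrm x * nrm y"
    using bounded_bilinear_functional_pos_bound by blast
  have representation_bound:
    "cmod (tensor_functional G w) \<le> K * (\<Sum>n. nrm (fst (w n)) * nrm (snd (w n)))"
    if "tensor_rep nrm w" for w
  proof -
    have s: "summable (\<lambda>n. nrm (fst (w n)) * nrm (snd (w n)))"
      using that unfolding tensor_rep_def .
    have "cmod (tensor_functional G w) \<le> (\<Sum>n. cmod (G (fst (w n)) (snd (w n))))"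
      unfolding tensor_functional_def
      by (rule summable_norm[OF summable_norm_tensor_functional[OF that]])
    also have "\<dots> \<le> (\<Sum>n. K * (nrm (fst (w n)) * nrm (snd (w n))))"
      using K(2) summable_mult[OF s, of K]
      by (intro suminf_le summable_norm_tensor_functional[OF that]) (simp_all add: mult.assoc)
    also have "\<dots> = K * (\<Sum>n. nrm (fst (w n)) * nrm (snd (w n)))"
      by (rule suminf_mult[OF s])
    finally show ?thesis .
  qed
  have "cmod (tensor_functional G v) \<le> K * tensor_norm scal nrm v" if v: "tensor_rep nrm v" for v
  proof -
    let ?S = "{(\<Sum>n. nrm (fst (w n)) * nrm (snd (w n))) | w. tensor_rep nrm w \<and> tensor_eq scal nrm v w}"
    have "?S \<noteq> {}" using v unfolding tensor_eq_def by blast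
    then have "cmod (tensor_functional G v) / K \<le> Inf ?S"
    proof (rule cInf_greatest)
      fix s assume "s \<in> ?S"
      then obtain w where w: "s = (\<Sum>n. nrm (fst (w n)) * nrm (snd (w n)))" "tensor_rep nrm w"
        "tensor_eq scal nrm v w" by blast
      then have "cmod (tensor_functional G v) \<le> K * s"
        using representation_bound tensor_functional_cong[OF w(3) G] by simp
      with K(1) show "cmod (tensor_functional G v) / K \<le> s" by (simp add: divide_simps mult.commute)
    qed
    with K(1) show ?thesis unfolding tensor_norm_def by (simp add: divide_simps mult.commute)
  qed
  with K(1) show ?thesis using that by blast
qed

lemma tensor_functional_morphism_bounded:
  assumes "bimodule_morphism scal mul nrm \<rho>"
  obtains M where "\<And>b. cmod (tensor_functional G (\<rho> b)) \<le> M * nrm b"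
proof -
  obtain K where K: "K > 0"
    "\<And>v. tensor_rep nrm v \<Longrightarrow> cmod (tensor_functional G v) \<le> K * tensor_norm scal nrm v"
    using tensor_functional_bounded by blast
  obtain C where C: "\<And>b. tensor_norm scal nrm (\<rho> b) \<le> C * nrm b"
    and rep: "\<And>b. tensor_rep nrm (\<rho> b)"
    using assms unfolding bimodule_morphism_def by blast
  have "cmod (tensor_functional G (\<rho> b)) \<le> (K * C) * nrm b" for b
    using order_trans[OF K(2)[OF rep[of b]] mult_left_mono[OF C[of b]]] K(1)
    by (simp add: mult.assoc)
  then show ?thesis using that by blast
qed

lemma tensor_functional_morphism_diff:
  assumes \<rho>: "bimodule_morphism scal mul nrm \<rho>" and scal_minus_one: "\<And>x. scal (-1) x = - x"
  shows "tensor_functional G (\<rho> (b - b')) = tensor_functional G (\<rho> b) - tensor_functional G (\<rho> b')"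
proof -
  define g where "g u n = G (fst (u n)) (snd (u n))" for u :: "nat \<Rightarrow> 'b \<times> 'b" and n
  have summ: "summable (g (\<rho> c))" for c
  proof (rule summable_norm_cancel)
    show "summable (\<lambda>n. norm (g (\<rho> c) n))"
      using \<rho> summable_norm_tensor_functional unfolding bimodule_morphism_def g_def by simp
  qed
  have "tensor_eq scal nrm (\<rho> (scal (-1) b' + b)) (tensor_add (tensor_scal scal (-1) (\<rho> b')) (\<rho> b))"
    using \<rho> unfolding bimodule_morphism_def by blast
  then have "tensor_functional G (\<rho> (b - b'))
      = tensor_functional G (tensor_add (tensor_scal scal (-1) (\<rho> b')) (\<rho> b))"
    using tensor_functional_cong[OF _ G] scal_minus_one by simp
  also have "\<dots> = (\<Sum>n. if even n then - g (\<rho> b') (n div 2) else g (\<rho> b) (n div 2))"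
  proof -
    have "G (scal (-1) x) y = - G x y" for x y
      using G unfolding bounded_bilinear_functional_def by simp
    then show ?thesis
      unfolding tensor_functional_def tensor_add_def tensor_scal_def g_def
      by (intro suminf_cong) simp
  qed
  also have "\<dots> = - suminf (g (\<rho> b')) + suminf (g (\<rho> b))"
    using sums_interleave[OF sums_minus[OF summable_sums[OF summ]] summable_sums[OF summ]]
    by (rule sums_unique[symmetric])
  finally show ?thesis unfolding tensor_functional_def g_def by simp
qed

lemma tensor_functional_morphism_eq_0_if_approx:
  assumes \<rho>: "bimodule_morphism scal mul nrm \<rho>" and scal_minus_one: "\<And>x. scal (-1) x = - x"
    and approx: "\<And>\<epsilon>. \<epsilon> > 0 \<Longrightarrow> \<exists>b'. nrm (b - b') < \<epsilon> \<and> tensor_functional G (\<rho> b') = 0"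
  shows "tensor_functional G (\<rho> b) = 0"
proof -
  obtain M where M: "\<And>c. cmod (tensor_functional G (\<rho> c)) \<le> M * nrm c"
    using tensor_functional_morphism_bounded[OF \<rho>] by blast
  have "cmod (tensor_functional G (\<rho> b)) \<le> \<epsilon>" if "\<epsilon> > 0" for \<epsilon>
  proof -
    obtain b' where b': "nrm (b - b') < \<epsilon> / (\<bar>M\<bar> + 1)" "tensor_functional G (\<rho> b') = 0"
      using approx[of "\<epsilon> / (\<bar>M\<bar> + 1)"] \<open>\<epsilon> > 0\<close> by auto
    have "cmod (tensor_functional G (\<rho> b)) = cmod (tensor_functional G (\<rho> (b - b')))"
      using tensor_functional_morphism_diff[OF \<rho> scal_minus_one] b'(2) by simp
    also have "\<dots> \<le> (\<bar>M\<bar> + 1) * nrm (b - b')"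
      using M[of "b - b'"] mult_right_mono[OF _ nrm_nonneg[of "b - b'"], of M "\<bar>M\<bar> + 1"]
      by linarith
    also have "\<dots> \<le> \<epsilon>"
      using b'(1) by (simp add: field_simps)
    finally show ?thesis .
  qed
  then show ?thesis
    using field_le_epsilon[of "cmod (tensor_functional G (\<rho> b))" 0] by simp
qed

end

section \<open>Characters\<close>

lemma complex_scal_norm: "complex_scal cs \<Longrightarrow> norm (cs c x) = cmod c * norm x"
  unfolding complex_scal_def by blast

lemma complex_scal_of_real: "complex_scal cs \<Longrightarrow> cs (complex_of_real r) x = r *\<^sub>R x"
  unfolding complex_scal_def by blast

lemma complex_scal_minus_one: "complex_scal cs \<Longrightarrow> cs (-1) x = - x"
  using complex_scal_of_real[of cs "-1" x] by simp

lemma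
  assumes "\<phi> \<in> character_space cs"
  shows character_add: "\<phi> (x + y) = \<phi> x + \<phi> y"
    and character_scal: "\<phi> (cs c x) = c * \<phi> x"
    and character_mult: "\<phi> (x * y) = \<phi> x * \<phi> y"
    and character_zero: "\<phi> 0 = 0"
    and character_diff: "\<phi> (x - y) = \<phi> x - \<phi> y"
proof -
  have add: "\<phi> (u + v) = \<phi> u + \<phi> v" for u v
    using assms unfolding character_space_def by blast
  show "\<phi> (x + y) = \<phi> x + \<phi> y" by (rule add)
  show "\<phi> (cs c x) = c * \<phi> x" "\<phi> (x * y) = \<phi> x * \<phi> y"
    using assms unfolding character_space_def by blast+
  show "\<phi> 0 = 0" using add[of 0 0] by simp
  have "\<phi> (x - y) + \<phi> y = \<phi> x" using add[of "x - y" y] by simp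
  then show "\<phi> (x - y) = \<phi> x - \<phi> y" by (simp add: eq_diff_eq)
qed

lemma character_normalized:
  assumes "\<phi> \<in> character_space cs"
  obtains y where "\<phi> y = 1"
proof -
  obtain x where "\<phi> x \<noteq> 0" using assms unfolding character_space_def by blast
  then have "\<phi> (cs (inverse (\<phi> x)) x) = 1" using character_scal[OF assms] by simp
  then show ?thesis by (rule that)
qed

text \<open>If \<open>\<bar>\<phi> x\<bar> > \<parallel>x\<parallel>\<close>, rescale \<open>x\<close> to \<open>u\<close> with \<open>\<parallel>u\<parallel> < 1\<close> and \<open>\<phi> u = 1\<close>.
  The Neumann series \<open>y = \<Sum>n. u\<^sup>n\<^sup>+\<^sup>1\<close> satisfies \<open>y = u + u y\<close>, whence \<open>\<phi> y = 1 + \<phi> y\<close>.\<close>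

lemma norm_character_le:
  fixes cs :: "complex \<Rightarrow> 'a::{real_normed_algebra,banach} \<Rightarrow> 'a"
  assumes cs: "complex_scal cs" and \<phi>: "\<phi> \<in> character_space cs"
  shows "cmod (\<phi> x) \<le> norm x"
proof (rule ccontr)
  assume "\<not> cmod (\<phi> x) \<le> norm x"
  then have less: "norm x < cmod (\<phi> x)" and nz: "\<phi> x \<noteq> 0" by auto
  define u where "u = cs (inverse (\<phi> x)) x"
  have \<phi>u: "\<phi> u = 1" using nz character_scal[OF \<phi>] unfolding u_def by simp
  have "norm u = norm x / cmod (\<phi> x)"
    using complex_scal_norm[OF cs] unfolding u_def by (simp add: norm_inverse divide_inverse mult.commute)
  with less nz have u_less_1: "norm u < 1" by simp
  define p where "p n = ((\<lambda>t. u * t) ^^ n) u" for n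
  have p_Suc: "p (Suc n) = u * p n" for n unfolding p_def by simp
  have norm_p: "norm (p n) \<le> norm u ^ Suc n" for n
  proof (induction n)
    case 0 then show ?case by (simp add: p_def)
  next
    case (Suc n)
    have "norm (p (Suc n)) \<le> norm u * norm (p n)" unfolding p_Suc by (rule norm_mult_ineq)
    also have "\<dots> \<le> norm u * norm u ^ Suc n" using Suc by (simp add: mult_left_mono)
    finally show ?case by simp
  qed
  have "summable (\<lambda>n. norm u ^ Suc n)" using u_less_1 by simp
  then have p_summable: "summable p"
    by (rule summable_comparison_test'[THEN summable_norm_cancel]) (use norm_p in simp)
  define y where "y = suminf p"
  have "u * y = (\<Sum>n. p (Suc n))"
    unfolding y_def p_Suc by (rule suminf_mult[OF p_summable, symmetric])
  also have "\<dots> = y - u" using suminf_split_head[OF p_summable] unfolding y_def by (simp add: p_def)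
  finally have "y = u + u * y" by (simp add: algebra_simps)
  then have "\<phi> y = \<phi> (u + u * y)" by simp
  also have "\<dots> = 1 + \<phi> y" by (simp add: character_add[OF \<phi>] character_mult[OF \<phi>] \<phi>u)
  finally show False by simp
qed

lemma bounded_linear_character:
  fixes cs :: "complex \<Rightarrow> 'a::{real_normed_algebra,banach} \<Rightarrow> 'a"
  assumes cs: "complex_scal cs" and \<phi>: "\<phi> \<in> character_space cs"
  shows "bounded_linear \<phi>"
proof (rule bounded_linear_intro[where K = 1])
  show "\<phi> (r *\<^sub>R x) = r *\<^sub>R \<phi> x" for r x
    using character_scal[OF \<phi>] complex_scal_of_real[OF cs] by (metis scaleR_conv_of_real)
qed (simp_all add: character_add[OF \<phi>] norm_character_le[OF cs \<phi>])

lemma left_approx_identity_approx: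
  fixes a :: "'a::real_normed_algebra"
  assumes "has_left_approx_identity TYPE('a)" "\<epsilon> > 0"
  shows "\<exists>e. norm (e * a - a) < \<epsilon>"
proof -
  obtain F :: "'a filter" where "F \<noteq> bot" "((\<lambda>e. e * a) \<longlongrightarrow> a) F"
    using assms(1) unfolding has_left_approx_identity_def by blast
  then have "\<exists>\<^sub>F e in F. dist (e * a) a < \<epsilon>"
    using tendstoD assms(2) eventually_frequently by blast
  then show ?thesis by (auto simp: dist_norm dest: frequently_ex)
qed

section \<open>The triangular algebra\<close>

lemma tri_norm_eq: "tri_norm t = norm (fst t) + norm (fst (snd t)) + norm (snd (snd t))"
  by (cases t) (simp add: tri_norm_def)

lemma tri_norm_nonneg: "0 \<le> tri_norm t"
  by (simp add: tri_norm_eq add_nonneg_nonneg)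

lemma tri_scal_minus_one: "complex_scal cs \<Longrightarrow> tri_scal cs (-1) t = - t"
  by (cases t) (simp add: tri_scal_def complex_scal_minus_one)

text \<open>\<open>tri_norm\<close> is equivalent to the product norm of \<open>'a \<times> 'a \<times> 'a\<close>, so summability and
  limits in \<open>T\<close> can be taken from the library.\<close>

lemma norm_le_tri_norm: "norm t \<le> tri_norm (t :: 'a::real_normed_algebra \<times> 'a \<times> 'a)"
proof -
  have "norm t \<le> norm (fst t) + norm (snd t)"
    using norm_Pair_le[of "fst t" "snd t"] by simp
  also have "norm (snd t) \<le> norm (fst (snd t)) + norm (snd (snd t))"
    using norm_Pair_le[of "fst (snd t)" "snd (snd t)"] by simp
  finally show ?thesis by (simp add: tri_norm_eq)
qed

lemma tri_norm_le_norm: "tri_norm (t :: 'a::real_normed_algebra \<times> 'a \<times> 'a) \<le> 3 * norm t"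
proof -
  obtain a x b where t: "t = (a, x, b)" by (cases t)
  have "norm a \<le> norm t" "norm x \<le> norm t" "norm b \<le> norm t"
    unfolding t by (meson norm_fst_le norm_snd_le order_trans)+
  then show ?thesis by (simp add: t tri_norm_def)
qed

lemma tendsto_tri_norm_iff:
  fixes f :: "'b \<Rightarrow> 'a::real_normed_algebra \<times> 'a \<times> 'a"
  shows "((\<lambda>x. tri_norm (f x - z)) \<longlongrightarrow> 0) F \<longleftrightarrow> (f \<longlongrightarrow> z) F"
proof
  assume "((\<lambda>x. tri_norm (f x - z)) \<longlongrightarrow> 0) F"
  then have "((\<lambda>x. f x - z) \<longlongrightarrow> 0) F"
    by (rule Lim_null_comparison[rotated]) (simp add: norm_le_tri_norm)
  then show "(f \<longlongrightarrow> z) F" by (rule LIM_zero_cancel)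
next
  assume "(f \<longlongrightarrow> z) F"
  then have "((\<lambda>x. 3 * norm (f x - z)) \<longlongrightarrow> 0) F"
    using tendsto_mult_right_zero tendsto_norm_zero LIM_zero by blast
  then show "((\<lambda>x. tri_norm (f x - z)) \<longlongrightarrow> 0) F"
    by (rule Lim_null_comparison[rotated]) (simp add: tri_norm_nonneg tri_norm_le_norm)
qed

lemma tri_norm_mult: "tri_norm (tri_mult s t) \<le> tri_norm s * tri_norm (t :: 'a::real_normed_algebra \<times> 'a \<times> 'a)"
proof -
  obtain a x b a' x' b' where st: "s = (a, x, b)" "t = (a', x', b')" by (cases s, cases t)
  have "tri_norm (tri_mult s t) = norm (a * a') + norm (a * x' + x * b') + norm (b * b')"
    by (simp add: st tri_mult_def tri_norm_def)
  also have "\<dots> \<le> norm a * norm a' + (norm a * norm x' + norm x * norm b') + norm b * norm b'"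
    by (intro add_mono norm_mult_ineq order_trans[OF norm_triangle_ineq])
  also have "\<dots> \<le> (norm a + norm x + norm b) * (norm a' + norm x' + norm b')"
    by (simp add: algebra_simps add_increasing)
  finally show ?thesis by (simp add: st tri_norm_def)
qed

lemma
  fixes u :: "nat \<Rightarrow> ('a::{real_normed_algebra,banach} \<times> 'a \<times> 'a) \<times> ('a \<times> 'a \<times> 'a)"
  assumes "tensor_rep tri_norm u"
  shows summable_tri_mult: "summable (\<lambda>n. tri_mult (fst (u n)) (snd (u n)))"
    and tensor_pi_tri_mult: "tensor_pi tri_mult tri_norm u = (\<Sum>n. tri_mult (fst (u n)) (snd (u n)))"
proof -
  show summable: "summable (\<lambda>n. tri_mult (fst (u n)) (snd (u n)))"
    using assms unfolding tensor_rep_def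
    by (rule summable_comparison_test'[THEN summable_norm_cancel])
       (simp add: order_trans[OF norm_le_tri_norm tri_norm_mult])
  show "tensor_pi tri_mult tri_norm u = (\<Sum>n. tri_mult (fst (u n)) (snd (u n)))"
    unfolding tensor_pi_def tendsto_tri_norm_iff
    by (rule the_equality) (use summable summable_LIMSEQ LIMSEQ_unique in blast)+
qed

section \<open>The functional \<open>\<phi>((st)\<^sub>1\<^sub>2)\<close> on \<open>T \<otimes>\<^sub>p T\<close>\<close>

lemma bounded_bilinear_functional_mult:
  assumes "\<And>x y. f (x + y) = f x + f y" "\<And>c x. f (scal c x) = c * f x"
    "\<And>x. cmod (f x) \<le> Kf * nrm x"
    and "\<And>x y. g (x + y) = g x + g y" "\<And>c x. g (scal c x) = c * g x"
    "\<And>x. cmod (g x) \<le> Kg * nrm x"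
  shows "bounded_bilinear_functional scal nrm (\<lambda>x y. f x * g y)"
  unfolding bounded_bilinear_functional_def
proof (intro conjI allI)
  show "\<exists>K. \<forall>x y. cmod (f x * g y) \<le> K * nrm x * nrm y"
  proof (intro exI allI)
    fix x y
    have "cmod (f x) * cmod (g y) \<le> (Kf * nrm x) * (Kg * nrm y)"
      using assms(3,6) by (intro mult_mono) (auto intro: order_trans[OF norm_ge_zero])
    then show "cmod (f x * g y) \<le> (Kf * Kg) * nrm x * nrm y"
      by (simp add: norm_mult mult_ac)
  qed
qed (simp_all add: assms(1,2,4,5) algebra_simps)

definition tri_form_11_12 :: "('a \<Rightarrow> complex) \<Rightarrow> 'a \<times> 'a \<times> 'a \<Rightarrow> 'a \<times> 'a \<times> 'a \<Rightarrow> complex" where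
  "tri_form_11_12 \<phi> s t = \<phi> (fst s) * \<phi> (fst (snd t))"

definition tri_form_12_22 :: "('a \<Rightarrow> complex) \<Rightarrow> 'a \<times> 'a \<times> 'a \<Rightarrow> 'a \<times> 'a \<times> 'a \<Rightarrow> complex" where
  "tri_form_12_22 \<phi> s t = \<phi> (fst (snd s)) * \<phi> (snd (snd t))"

lemma character_tri_mult_12:
  assumes "\<phi> \<in> character_space cs"
  shows "\<phi> (fst (snd (tri_mult s t))) = tri_form_11_12 \<phi> s t + tri_form_12_22 \<phi> s t"
  by (cases s; cases t)
     (simp add: tri_mult_def tri_form_11_12_def tri_form_12_22_def
       character_add[OF assms] character_mult[OF assms])

lemma tri_scal_entries:
  "fst (tri_scal cs c t) = cs c (fst t)"
  "fst (snd (tri_scal cs c t)) = cs c (fst (snd t))"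
  "snd (snd (tri_scal cs c t)) = cs c (snd (snd t))"
  by (cases t; simp add: tri_scal_def)+

lemma norm_entries_le_tri_norm:
  "norm (fst t) \<le> tri_norm t" "norm (fst (snd t)) \<le> tri_norm t" "norm (snd (snd t)) \<le> tri_norm t"
  by (simp_all add: tri_norm_eq)

lemma
  fixes cs :: "complex \<Rightarrow> 'a::{real_normed_algebra,banach} \<Rightarrow> 'a"
  assumes cs: "complex_scal cs" and \<phi>: "\<phi> \<in> character_space cs"
  shows bounded_bilinear_tri_form_11_12:
      "bounded_bilinear_functional (tri_scal cs) tri_norm (tri_form_11_12 \<phi>)"
    and bounded_bilinear_tri_form_12_22:
      "bounded_bilinear_functional (tri_scal cs) tri_norm (tri_form_12_22 \<phi>)"
proof -
  note entry_bound = order_trans[OF norm_character_le[OF cs \<phi>] norm_entries_le_tri_norm(1)]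
    order_trans[OF norm_character_le[OF cs \<phi>] norm_entries_le_tri_norm(2)]
    order_trans[OF norm_character_le[OF cs \<phi>] norm_entries_le_tri_norm(3)]
  note entry_simps = character_add[OF \<phi>] character_scal[OF \<phi>] tri_scal_entries
  show "bounded_bilinear_functional (tri_scal cs) tri_norm (tri_form_11_12 \<phi>)"
    unfolding tri_form_11_12_def
    by (rule bounded_bilinear_functional_mult[where Kf = 1 and Kg = 1])
       (simp_all add: entry_simps entry_bound)
  show "bounded_bilinear_functional (tri_scal cs) tri_norm (tri_form_12_22 \<phi>)"
    unfolding tri_form_12_22_def
    by (rule bounded_bilinear_functional_mult[where Kf = 1 and Kg = 1])
       (simp_all add: entry_simps entry_bound)
qed

lemma character_tensor_pi_12:
  fixes cs :: "complex \<Rightarrow> 'a::{real_normed_algebra,banach} \<Rightarrow> 'a"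
    and u :: "nat \<Rightarrow> ('a \<times> 'a \<times> 'a) \<times> ('a \<times> 'a \<times> 'a)"
  assumes cs: "complex_scal cs" and \<phi>: "\<phi> \<in> character_space cs" and u: "tensor_rep tri_norm u"
  shows "\<phi> (fst (snd (tensor_pi tri_mult tri_norm u)))
    = tensor_functional (tri_form_11_12 \<phi>) u + tensor_functional (tri_form_12_22 \<phi>) u"
proof -
  have "bounded_linear (\<lambda>t::'a \<times> 'a \<times> 'a. \<phi> (fst (snd t)))"
    using bounded_linear_character[OF cs \<phi>] bounded_linear_fst bounded_linear_snd
    by (auto intro: bounded_linear_compose)
  then have "\<phi> (fst (snd (\<Sum>n. tri_mult (fst (u n)) (snd (u n)))))
      = (\<Sum>n. \<phi> (fst (snd (tri_mult (fst (u n)) (snd (u n))))))"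
    by (rule bounded_linear.suminf[OF _ summable_tri_mult[OF u]])
  also have "\<dots> = (\<Sum>n. tri_form_11_12 \<phi> (fst (u n)) (snd (u n)) + tri_form_12_22 \<phi> (fst (u n)) (snd (u n)))"
    by (simp add: character_tri_mult_12[OF \<phi>])
  also have "\<dots> = tensor_functional (tri_form_11_12 \<phi>) u + tensor_functional (tri_form_12_22 \<phi>) u"
    unfolding tensor_functional_def
    using summable_norm_tensor_functional[OF bounded_bilinear_tri_form_11_12[OF cs \<phi>] tri_norm_nonneg u,
        THEN summable_norm_cancel]
      summable_norm_tensor_functional[OF bounded_bilinear_tri_form_12_22[OF cs \<phi>] tri_norm_nonneg u,
        THEN summable_norm_cancel]
    by (rule suminf_add[symmetric])
  finally show ?thesis by (simp add: tensor_pi_tri_mult[OF u])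
qed

text \<open>\<open>(0, y, 0)\<close> is approximately \<open>(0, e, 0) (0, 0, y)\<close>, and left multiplication by
  \<open>(0, e, 0)\<close> annihilates the \<open>(1,1)\<close> entry.\<close>

lemma tensor_functional_tri_form_11_12_eq_0:
  fixes cs :: "complex \<Rightarrow> 'a::{real_normed_algebra,banach} \<Rightarrow> 'a"
  assumes cs: "complex_scal cs" and approx_id: "has_left_approx_identity TYPE('a)"
    and \<phi>: "\<phi> \<in> character_space cs"
    and \<rho>: "bimodule_morphism (tri_scal cs) (tri_mult :: 'a \<times> 'a \<times> 'a \<Rightarrow> _) tri_norm \<rho>"
  shows "tensor_functional (tri_form_11_12 \<phi>) (\<rho> (0, y, 0)) = 0"
proof (rule tensor_functional_morphism_eq_0_if_approx[OF bounded_bilinear_tri_form_11_12[OF cs \<phi>]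
    tri_norm_nonneg \<rho> tri_scal_minus_one[OF cs]])
  fix \<epsilon> :: real assume "\<epsilon> > 0"
  then obtain e where e: "norm (e * y - y) < \<epsilon>"
    using left_approx_identity_approx[OF approx_id] by blast
  have close: "tri_norm ((0, y, 0) - tri_mult (0, e, 0) (0, 0, y)) < \<epsilon>"
    using e by (simp add: tri_mult_def tri_norm_def norm_minus_commute)
  have "tensor_eq (tri_scal cs) tri_norm (\<rho> (tri_mult (0, e, 0) (0, 0, y)))
      (tensor_lmult tri_mult (0, e, 0) (\<rho> (0, 0, y)))"
    using \<rho> unfolding bimodule_morphism_def by blast
  then have "tensor_functional (tri_form_11_12 \<phi>) (\<rho> (tri_mult (0, e, 0) (0, 0, y)))
      = tensor_functional (tri_form_11_12 \<phi>) (tensor_lmult tri_mult (0, e, 0) (\<rho> (0, 0, y)))"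
    by (rule tensor_functional_cong[OF _ bounded_bilinear_tri_form_11_12[OF cs \<phi>]])
  also have "\<dots> = 0"
  proof -
    have "fst (tri_mult (0, e, 0) t) = 0" for t :: "'a \<times> 'a \<times> 'a"
      by (cases t) (simp add: tri_mult_def)
    then show ?thesis
      by (simp add: tensor_functional_def tensor_lmult_def tri_form_11_12_def character_zero[OF \<phi>])
  qed
  finally have "tensor_functional (tri_form_11_12 \<phi>) (\<rho> (tri_mult (0, e, 0) (0, 0, y))) = 0" .
  with close show "\<exists>b'. tri_norm ((0, y, 0) - b') < \<epsilon> \<and> tensor_functional (tri_form_11_12 \<phi>) (\<rho> b') = 0"
    by blast
qed

text \<open>\<open>(0, y, 0)\<close> is approximately \<open>(e, 0, 0) (0, y, 0)\<close>, and right multiplication by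
  \<open>(0, y, 0)\<close> annihilates the \<open>(2,2)\<close> entry.\<close>

lemma tensor_functional_tri_form_12_22_eq_0:
  fixes cs :: "complex \<Rightarrow> 'a::{real_normed_algebra,banach} \<Rightarrow> 'a"
  assumes cs: "complex_scal cs" and approx_id: "has_left_approx_identity TYPE('a)"
    and \<phi>: "\<phi> \<in> character_space cs"
    and \<rho>: "bimodule_morphism (tri_scal cs) (tri_mult :: 'a \<times> 'a \<times> 'a \<Rightarrow> _) tri_norm \<rho>"
  shows "tensor_functional (tri_form_12_22 \<phi>) (\<rho> (0, y, 0)) = 0"
proof (rule tensor_functional_morphism_eq_0_if_approx[OF bounded_bilinear_tri_form_12_22[OF cs \<phi>]
    tri_norm_nonneg \<rho> tri_scal_minus_one[OF cs]])
  fix \<epsilon> :: real assume "\<epsilon> > 0"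
  then obtain e where e: "norm (e * y - y) < \<epsilon>"
    using left_approx_identity_approx[OF approx_id] by blast
  have close: "tri_norm ((0, y, 0) - tri_mult (e, 0, 0) (0, y, 0)) < \<epsilon>"
    using e by (simp add: tri_mult_def tri_norm_def norm_minus_commute)
  have "tensor_eq (tri_scal cs) tri_norm (\<rho> (tri_mult (e, 0, 0) (0, y, 0)))
      (tensor_rmult tri_mult (\<rho> (e, 0, 0)) (0, y, 0))"
    using \<rho> unfolding bimodule_morphism_def by blast
  then have "tensor_functional (tri_form_12_22 \<phi>) (\<rho> (tri_mult (e, 0, 0) (0, y, 0)))
      = tensor_functional (tri_form_12_22 \<phi>) (tensor_rmult tri_mult (\<rho> (e, 0, 0)) (0, y, 0))"
    by (rule tensor_functional_cong[OF _ bounded_bilinear_tri_form_12_22[OF cs \<phi>]])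
  also have "\<dots> = 0"
  proof -
    have "snd (snd (tri_mult t (0, y, 0))) = 0" for t :: "'a \<times> 'a \<times> 'a"
      by (cases t) (simp add: tri_mult_def)
    then show ?thesis
      by (simp add: tensor_functional_def tensor_rmult_def tri_form_12_22_def character_zero[OF \<phi>])
  qed
  finally have "tensor_functional (tri_form_12_22 \<phi>) (\<rho> (tri_mult (e, 0, 0) (0, y, 0))) = 0" .
  with close show "\<exists>b'. tri_norm ((0, y, 0) - b') < \<epsilon> \<and> tensor_functional (tri_form_12_22 \<phi>) (\<rho> b') = 0"
    by blast
qed

lemma character_tensor_pi_morphism_12_eq_0:
  fixes cs :: "complex \<Rightarrow> 'a::{real_normed_algebra,banach} \<Rightarrow> 'a"
  assumes cs: "complex_scal cs" and approx_id: "has_left_approx_identity TYPE('a)"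
    and \<phi>: "\<phi> \<in> character_space cs"
    and \<rho>: "bimodule_morphism (tri_scal cs) (tri_mult :: 'a \<times> 'a \<times> 'a \<Rightarrow> _) tri_norm \<rho>"
  shows "\<phi> (fst (snd (tensor_pi tri_mult tri_norm (\<rho> (0, y, 0))))) = 0"
proof -
  have "tensor_rep tri_norm (\<rho> (0, y, 0))" using \<rho> unfolding bimodule_morphism_def by blast
  then show ?thesis
    by (simp add: character_tensor_pi_12[OF cs \<phi>] tensor_functional_tri_form_11_12_eq_0[OF assms]
        tensor_functional_tri_form_12_22_eq_0[OF assms])
qed

theorem mainTheorem7:
  fixes cs :: "complex \<Rightarrow> 'a::{real_normed_algebra,banach} \<Rightarrow> 'a"
    and \<phi> :: "'a \<Rightarrow> complex"
  assumes "complex_scal cs"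
    and "has_left_approx_identity TYPE('a)"
    and "\<phi> \<in> character_space cs"
  shows "\<not> approx_biprojective (tri_scal cs) (tri_mult :: 'a \<times> 'a \<times> 'a \<Rightarrow> _) tri_norm"
proof
  assume "approx_biprojective (tri_scal cs) (tri_mult :: 'a \<times> 'a \<times> 'a \<Rightarrow> _) tri_norm"
  then obtain F :: "(('a \<times> 'a \<times> 'a) \<Rightarrow> nat \<Rightarrow> ('a \<times> 'a \<times> 'a) \<times> ('a \<times> 'a \<times> 'a)) filter"
    where "F \<noteq> bot" and "eventually (bimodule_morphism (tri_scal cs) tri_mult tri_norm) F"
      and lim: "\<And>b. ((\<lambda>\<rho>. tri_norm (tensor_pi tri_mult tri_norm (\<rho> b) - b)) \<longlongrightarrow> 0) F"
    unfolding approx_biprojective_def by blast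
  obtain y where y: "\<phi> y = 1" using character_normalized[OF assms(3)] .
  define z :: "'a \<times> 'a \<times> 'a" where "z = (0, y, 0)"
  have "\<forall>\<^sub>F \<rho> in F. bimodule_morphism (tri_scal cs) tri_mult tri_norm \<rho>
      \<and> tri_norm (tensor_pi tri_mult tri_norm (\<rho> z) - z) < 1"
    using \<open>eventually _ F\<close> order_tendstoD(2)[OF lim, of 1] by (simp add: eventually_conj)
  then obtain \<rho> where \<rho>: "bimodule_morphism (tri_scal cs) (tri_mult :: 'a \<times> 'a \<times> 'a \<Rightarrow> _) tri_norm \<rho>"
    and close: "tri_norm (tensor_pi tri_mult tri_norm (\<rho> z) - z) < 1"
    using eventually_happens'[OF \<open>F \<noteq> bot\<close>] by blast
  define x where "x = fst (snd (tensor_pi tri_mult tri_norm (\<rho> z)))"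
  have "1 = cmod (\<phi> (y - x))"
    using character_tensor_pi_morphism_12_eq_0[OF assms \<rho>] y
    by (simp add: x_def z_def character_diff[OF assms(3)])
  also have "\<dots> \<le> norm (fst (snd (tensor_pi tri_mult tri_norm (\<rho> z) - z)))"
    using norm_character_le[OF assms(1,3)] by (simp add: x_def z_def norm_minus_commute)
  also have "\<dots> \<le> tri_norm (tensor_pi tri_mult tri_norm (\<rho> z) - z)"
    by (rule norm_entries_le_tri_norm(2))
  finally show False using close by simp
qed

end
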